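(* In the discontinuous Galerkin setting of the context, for every $T\in\mathcal T_h$, every face $e\in F_h$ with $e\subset\partial T$ (with $\mathbf n_e=\mathbf n_{\partial T}|_e$ the outward normal), every $\ell\in\{1,2\}$ and every $v_h\in V_h$, \[\|\chi_\ell^{1/2}\nabla v_h|_T\|^2_{L^2(e)^d}\le C_\chi h_T^{-1}\|\chi_\ell^{1/2}\nabla v_h\|^2_{L^2(T)^d}.\]
   Context: $\mathcal D\subset\mathbb R^d$ is an open convex polygon; $\chi_1,\chi_2\in W^{1,\infty}(\mathcal D)$ are non-negative weight functions forming a partition of unity with $\|\chi_\ell\|_{L^\infty}\le1$. $\mathcal T_h$ is a (shape-regular) mesh of $\mathcal D$ whose elements $T$ are affine images of a fixed reference convex polyhedron; $h_T$ is the diameter of $T$, $h=\max_T h_T$, and $\chi_\ell|_T$ is linear on every $T\in\mathcal T_h$. $F_h$ is the set of faces of the mesh. $V_h=\{v_h\in L^2(\mathcal D):v_h|_T\in\mathbb P^1(T)\ \forall T\in\mathcal T_h\}$ (piecewise affine, possibly discontinuous); $v_h|_T$ on a face denotes the trace from $T$. $C_\chi>0$ is the discrete trace constant (independent of $h$ and $T$) such that for all $T\in\mathcal T_h$, all faces $e\subset\partial T$ and all polynomials $q$ of degree at most $1$ on $T$, $\|q\|_{L^1(e)}\le C_\chi h_T^{-1}\|q\|_{L^1(T)}$. *)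

theory Defs
  imports "HOL-Analysis.Analysis"
begin

text \<open>(d-1)-dimensional surface (area) measure on the affine hyperplane
  H = {x. n \<bullet> x = c}, for a unit vector n.  It is the push-forward of
  Lebesgue measure restricted to the slab {x. c - 1 \<le> n \<bullet> x \<le> c} (of unit
  width) under the orthogonal projection onto H; by Fubini, a Borel set
  A \<subseteq> H gets exactly its (d-1)-dimensional area, and the measure is
  concentrated on H.\<close>
definition hyperplane_measure :: "'a::euclidean_space \<Rightarrow> real \<Rightarrow> 'a measure" where
  "hyperplane_measure n c =
     distr (restrict_space lebesgue {x. c - 1 \<le> n \<bullet> x \<and> n \<bullet> x \<le> c}) borel
           (\<lambda>x. x + (c - n \<bullet> x) *\<^sub>R n)"

definition grad :: "('a::real_inner \<Rightarrow> real) \<Rightarrow> 'a \<Rightarrow> 'a" where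
  "grad f x = (THE D. GDERIV f x :> D)"

definition affine_poly_on :: "'a::euclidean_space set \<Rightarrow> ('a \<Rightarrow> real) \<Rightarrow> bool" where
  "affine_poly_on S f \<longleftrightarrow> (\<exists>g b. \<forall>x\<in>S. f x = g \<bullet> x + b)"

end

theory Submission
  imports Defs
begin

text \<open>On a mesh element \<open>T\<close> the function \<open>v\<^sub>h\<close> is affine, so its gradient is a constant
  vector \<open>g\<close> and \<open>|\<chi>\<^sub>\<ell>^(1/2) \<nabla>v\<^sub>h|\<^sup>2 = |g|\<^sup>2 \<chi>\<^sub>\<ell>\<close>. Since \<open>\<chi>\<^sub>\<ell>\<close> is itself affine on \<open>T\<close>,
  the discrete trace inequality applies to \<open>q = \<chi>\<^sub>\<ell>\<close>; multiplying it by \<open>|g|\<^sup>2\<close> gives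
  the claim.\<close>

lemma GDERIV_unique:
  assumes "GDERIV f x :> D" and "GDERIV f x :> E"
  shows "D = E"
proof -
  have "(\<lambda>h. h \<bullet> D) = (\<lambda>h. h \<bullet> E)"
    using assms unfolding gderiv_def by (rule has_derivative_unique)
  then have "(D - E) \<bullet> D = (D - E) \<bullet> E"
    by metis
  then have "(D - E) \<bullet> (D - E) = 0"
    by (simp add: inner_diff_right)
  then show ?thesis
    by simp
qed

lemma grad_eqI: "GDERIV f x :> D \<Longrightarrow> grad f x = D"
  unfolding grad_def using GDERIV_unique by blast

lemma GDERIV_affine: "GDERIV (\<lambda>x. g \<bullet> x + b) x :> g"
  unfolding gderiv_def by (auto intro!: derivative_eq_intros simp: inner_commute)

lemma grad_affine: "grad (\<lambda>x. g \<bullet> x + b) x = g"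
  by (rule grad_eqI [OF GDERIV_affine])

text \<open>Holds for negative \<open>a\<close> too, as \<open>sqrt\<close> is odd: no sign of \<open>\<chi>\<^sub>\<ell>\<close> is needed on
  facets in the boundary of the domain, where nonnegativity is not assumed.\<close>

lemma norm_sqrt_scaleR_power2: "(norm (sqrt a *\<^sub>R v))\<^sup>2 = \<bar>a\<bar> * (norm v)\<^sup>2"
  by (simp add: power_mult_distrib flip: real_sqrt_abs')

theorem lemma5p4:
  fixes D :: "'a::euclidean_space set"
    and Th :: "'a set set"
    and K :: "'a set"
    and chi :: "nat \<Rightarrow> 'a \<Rightarrow> real"
    and vh :: "'a set \<Rightarrow> 'a \<Rightarrow> real"
    and C_chi :: real
    and T e :: "'a set" and n :: 'a and c :: real and l :: nat
  assumes D_open: "open D" and D_convex: "convex D"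
    and D_polygon: "\<exists>P. polytope P \<and> D = interior P"
    and K_ref: "polytope K" "interior K \<noteq> {}"
    and mesh_finite: "finite Th"
    and mesh_cover: "\<Union>Th = closure D"
    and mesh_disj: "\<forall>T1\<in>Th. \<forall>T2\<in>Th. T1 \<noteq> T2 \<longrightarrow> interior T1 \<inter> interior T2 = {}"
    and mesh_affine: "\<forall>T\<in>Th. \<exists>A b. linear A \<and> bij A \<and> T = (\<lambda>x. A x + b) ` K"
    and chi_W1inf: "\<forall>j\<in>{1,2}. \<exists>L. lipschitz_on L D (chi j)"
    and chi_nonneg: "\<forall>j\<in>{1,2}. \<forall>x\<in>D. 0 \<le> chi j x"
    and chi_bound: "\<forall>j\<in>{1,2}. \<forall>x\<in>D. \<bar>chi j x\<bar> \<le> 1"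
    and chi_pu: "\<forall>x\<in>D. chi 1 x + chi 2 x = 1"
    and chi_linear: "\<forall>j\<in>{1,2}. \<forall>T\<in>Th. affine_poly_on T (chi j)"
    and vh_Vh: "\<forall>T\<in>Th. affine_poly_on UNIV (vh T)"
    and C_pos: "C_chi > 0"
    and trace: "\<forall>T\<in>Th. \<forall>e n c. e facet_of T \<and> norm n = 1 \<and> T \<subseteq> {x. n \<bullet> x \<le> c}
                  \<and> e \<subseteq> {x. n \<bullet> x = c} \<longrightarrow>
                 (\<forall>q. affine_poly_on T q \<longrightarrow>
                    (LINT x:e|hyperplane_measure n c. \<bar>q x\<bar>)
                      \<le> C_chi * inverse (diameter T) * (LINT x:T|lebesgue. \<bar>q x\<bar>))"
    and T_in: "T \<in> Th"
    and e_face: "e facet_of T"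
    and n_normal: "norm n = 1" "T \<subseteq> {x. n \<bullet> x \<le> c}" "e \<subseteq> {x. n \<bullet> x = c}"
    and l_in: "l \<in> {1,2}"
  shows "(LINT x:e|hyperplane_measure n c. (norm (sqrt (chi l x) *\<^sub>R grad (vh T) x))\<^sup>2)
           \<le> C_chi * inverse (diameter T) *
              (LINT x:T|lebesgue. (norm (sqrt (chi l x) *\<^sub>R grad (vh T) x))\<^sup>2)"
proof -
  obtain g b where vh_T: "vh T = (\<lambda>x. g \<bullet> x + b)"
    using vh_Vh T_in unfolding affine_poly_on_def by fast
  have integrand: "(norm (sqrt (chi l x) *\<^sub>R grad (vh T) x))\<^sup>2 = (norm g)\<^sup>2 * \<bar>chi l x\<bar>" for x
    unfolding vh_T grad_affine norm_sqrt_scaleR_power2 by (rule mult.commute)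
  have chi_trace: "(LINT x:e|hyperplane_measure n c. \<bar>chi l x\<bar>)
      \<le> C_chi * inverse (diameter T) * (LINT x:T|lebesgue. \<bar>chi l x\<bar>)"
    using trace T_in e_face n_normal chi_linear l_in by blast
  have "(LINT x:e|hyperplane_measure n c. (norm g)\<^sup>2 * \<bar>chi l x\<bar>)
      = (norm g)\<^sup>2 * (LINT x:e|hyperplane_measure n c. \<bar>chi l x\<bar>)"
    by simp
  also have "\<dots> \<le> (norm g)\<^sup>2 * (C_chi * inverse (diameter T) * (LINT x:T|lebesgue. \<bar>chi l x\<bar>))"
    by (rule mult_left_mono [OF chi_trace]) simp
  also have "\<dots> = C_chi * inverse (diameter T) * (LINT x:T|lebesgue. (norm g)\<^sup>2 * \<bar>chi l x\<bar>)"
    by simp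
  finally show ?thesis
    unfolding integrand .
qed

end
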